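(* Let $\mathcal{P}(\mathbb{R}^d)$ denote the set of probability measures on $\mathbb{R}^d$ that are absolutely continuous with respect to Lebesgue measure and admit smooth densities. Let $p=\tilde p/\mathcal{Z}\in\mathcal{P}(\mathbb{R}^d)$ be a target density with $\tilde p:\mathbb{R}^d\to\mathbb{R}_{\ge0}$ continuous and $\mathcal{Z}=\int\tilde p(x)\,\mathrm{d}x$. Fix $\varepsilon_{\text{tr}}>0$, $\varepsilon_{\text{ent}}>0$ and $q_0\in\mathcal{P}(\mathbb{R}^d)$, and for $i\in\mathbb{N}$ consider the iterative scheme $$q_{i+1}=\operatorname*{arg\,min}_{q\in\mathcal{P}(\mathbb{R}^d)} D_{\mathrm{KL}}(q\,\|\,p)\quad\text{s.t.}\quad D_{\mathrm{KL}}(q\,\|\,q_i)\le\varepsilon_{\text{tr}},\quad H(q_i)-H(q)\le\varepsilon_{\text{ent}}$$ (together with the normalization constraint $\int q(x)\,\mathrm{d}x=1$), treated via a Lagrangian with multipliers $\lambda\ge0$ (trust-region constraint) and $\eta\ge0$ (entropy constraint). Then the intermediate optimal densities solving this problem satisfy $$q_{i+1}(x,\lambda,\eta)=\frac{q_i(x)^{\frac{\lambda}{1+\lambda+\eta}}\,\tilde p(x)^{\frac{1}{1+\lambda+\eta}}}{\mathcal{Z}_{i+1}(\lambda,\eta)},\qquad \mathcal{Z}_{i+1}(\lambda,\eta)=\int q_i(x)^{\frac{\lambda}{1+\lambda+\eta}}\,\tilde p(x)^{\frac{1}{1+\lambda+\eta}}\,\mathrm{d}x,$$ where $q_{i+1}$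 are the unique optima of the Lagrangian corresponding to this problem.
   Context: $D_{\mathrm{KL}}(q\|r)=\int q(x)\log\frac{q(x)}{r(x)}\,\mathrm{d}x$ is the Kullback–Leibler divergence and $H(q)=-\int q(x)\log q(x)\,\mathrm{d}x$ the Shannon entropy. The Lagrangian is $D_{\mathrm{KL}}(q\|p)+\lambda\big(D_{\mathrm{KL}}(q\|q_i)-\varepsilon_{\text{tr}}\big)+\eta\big(H(q_i)-H(q)-\varepsilon_{\text{ent}}\big)$.
   Formalization: $\mathcal{Z}_{i+1}(\lambda,\eta)$ is also assumed finite, minimisers of the Lagrangian range over densities in $\mathcal{P}(\mathbb{R}^d)$ whose divergence and entropy terms are finite, and the closed form is claimed optimal only when it is such a density. Apart from conventions, each condition added here is assumed in the paper as well or is needed for the statement above to hold. *)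

theory Defs
  imports "HOL-Analysis.Analysis"
begin

fun Ck :: "nat \<Rightarrow> ('a::euclidean_space \<Rightarrow> real) \<Rightarrow> bool" where
  "Ck 0 f = continuous_on UNIV f"
| "Ck (Suc k) f = (\<exists>D :: 'a \<Rightarrow> 'a \<Rightarrow> real.
       (\<forall>x. (f has_derivative (\<lambda>h. D h x)) (at x)) \<and> (\<forall>h. Ck k (\<lambda>x. D h x)))"

definition smooth :: "('a::euclidean_space \<Rightarrow> real) \<Rightarrow> bool" where
  "smooth f \<longleftrightarrow> (\<forall>k. Ck k f)"

definition smooth_densities :: "('a::euclidean_space \<Rightarrow> real) set" where
  "smooth_densities = {q. smooth q \<and> (\<forall>x. 0 \<le> q x) \<and>
      integrable lborel q \<and> integral\<^sup>L lborel q = 1}"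

text \<open>KL divergence D_KL(q || r) is finite: q << r (a.e.) and the integrand
  q log (q/r) (with 0 log 0 = 0) is Lebesgue integrable.\<close>
definition KL_finite :: "('a::euclidean_space \<Rightarrow> real) \<Rightarrow> ('a \<Rightarrow> real) \<Rightarrow> bool" where
  "KL_finite q r \<longleftrightarrow> (AE x in lborel. 0 < q x \<longrightarrow> 0 < r x) \<and>
      integrable lborel (\<lambda>x. q x * ln (q x / r x))"

definition KL :: "('a::euclidean_space \<Rightarrow> real) \<Rightarrow> ('a \<Rightarrow> real) \<Rightarrow> real" where
  "KL q r = (\<integral>x. q x * ln (q x / r x) \<partial>lborel)"

definition entropy_finite :: "('a::euclidean_space \<Rightarrow> real) \<Rightarrow> bool" where
  "entropy_finite q \<longleftrightarrow> integrable lborel (\<lambda>x. q x * ln (q x))"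

definition entropy :: "('a::euclidean_space \<Rightarrow> real) \<Rightarrow> real" where
  "entropy q = - (\<integral>x. q x * ln (q x) \<partial>lborel)"

text \<open>Power with the convention 0^0 = 1 (Isabelle's powr has 0 powr 0 = 0).\<close>
definition pw :: "real \<Rightarrow> real \<Rightarrow> real" where
  "pw x a = (if a = 0 then 1 else x powr a)"

definition lagrangian ::
  "('a::euclidean_space \<Rightarrow> real) \<Rightarrow> ('a \<Rightarrow> real) \<Rightarrow> real \<Rightarrow> real \<Rightarrow> real \<Rightarrow> real \<Rightarrow> ('a \<Rightarrow> real) \<Rightarrow> real" where
  "lagrangian p qi eps_tr eps_ent lam eta q =
     KL q p + lam * (KL q qi - eps_tr) + eta * (entropy qi - entropy q - eps_ent)"

definition lagr_domain ::
  "('a::euclidean_space \<Rightarrow> real) \<Rightarrow> ('a \<Rightarrow> real) \<Rightarrow> real \<Rightarrow> real \<Rightarrow> ('a \<Rightarrow> real) set" where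
  "lagr_domain p qi lam eta = {q \<in> smooth_densities. KL_finite q p \<and>
      (lam \<noteq> 0 \<longrightarrow> KL_finite q qi) \<and> (eta \<noteq> 0 \<longrightarrow> entropy_finite q)}"

end

theory Submission
  imports Defs "HOL-Computational_Algebra.Polynomial"
begin

text \<open>For \<open>q\<close> in the domain the Lagrangian equals \<open>c \<integral> q ln (q / r) + const\<close>, with
  \<open>c = 1 + \<lambda> + \<eta>\<close> and the unnormalised \<open>r = qi\<^bsup>\<lambda>/c\<^esup> pt\<^bsup>1/c\<^esup>\<close>, so its minimizers are those of the
  relative entropy \<open>q \<mapsto> \<integral> q ln (q / r)\<close>. Gibbs' inequality gives \<open>\<integral> q ln (q / r) \<ge> - ln \<integral> r\<close>
  with equality at \<open>r / \<integral> r\<close>, so \<open>r / \<integral> r\<close> is optimal whenever it is admissible.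
  Conversely, the domain consists of smooth densities, so a minimizer \<open>q\<close> is probed by smooth
  perturbations: multiplying it by \<open>1 + t (\<phi> - \<mu>)\<close> for bump functions \<open>\<phi>\<close> shows that
  \<open>ln (q / r)\<close> is constant where \<open>q, r > 0\<close>; mixing in a bump density where \<open>q = 0 < r\<close> would
  gain the entropy \<open>- t ln t\<close> at linear cost, so \<open>q > 0\<close> wherever \<open>r > 0\<close>; and \<open>q\<close> cannot be
  positive where \<open>r\<close> vanishes since \<open>q \<ll> r\<close>. Hence \<open>q = r / \<integral> r\<close>.\<close>

section \<open>Smooth functions and a smooth bump\<close>

lemma Ck_Suc_imp_Ck: "Ck (Suc k) f \<Longrightarrow> Ck k f"
proof (induction k arbitrary: f)
  case 0
  then show ?case
    by (auto intro: continuous_at_imp_continuous_on has_derivative_continuous)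
next
  case (Suc k)
  then show ?case by auto
qed

lemma Ck_imp_continuous: "Ck k f \<Longrightarrow> continuous_on UNIV f"
  by (cases k) (auto intro: continuous_at_imp_continuous_on has_derivative_continuous)

lemma Ck_const: "Ck k (\<lambda>x. a)"
proof (induction k arbitrary: a)
  case (Suc k)
  show ?case
    by (intro Ck.simps(2)[THEN iffD2] exI[of _ "\<lambda>h x. 0"]) (auto simp: Suc)
qed simp

lemma Ck_add: "Ck k f \<Longrightarrow> Ck k g \<Longrightarrow> Ck k (\<lambda>x. f x + g x)"
proof (induction k arbitrary: f g)
  case 0
  then show ?case by (auto intro: continuous_intros)
next
  case (Suc k)
  from Suc.prems obtain D E where
    D: "\<forall>x. (f has_derivative (\<lambda>h. D h x)) (at x)" "\<forall>h. Ck k (\<lambda>x. D h x)" and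
    E: "\<forall>x. (g has_derivative (\<lambda>h. E h x)) (at x)" "\<forall>h. Ck k (\<lambda>x. E h x)"
    by auto
  show ?case
    by (rule Ck.simps(2)[THEN iffD2], rule exI[of _ "\<lambda>h x. D h x + E h x"])
       (use D E Suc.IH in \<open>auto intro: has_derivative_add\<close>)
qed

lemma Ck_mult: "Ck k f \<Longrightarrow> Ck k g \<Longrightarrow> Ck k (\<lambda>x. f x * g x)"
proof (induction k arbitrary: f g)
  case 0
  then show ?case by (auto intro: continuous_intros)
next
  case (Suc k)
  from Suc.prems obtain D E where
    D: "\<forall>x. (f has_derivative (\<lambda>h. D h x)) (at x)" "\<forall>h. Ck k (\<lambda>x. D h x)" and
    E: "\<forall>x. (g has_derivative (\<lambda>h. E h x)) (at x)" "\<forall>h. Ck k (\<lambda>x. E h x)"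
    by auto
  have "Ck k f" "Ck k g"
    using Suc.prems Ck_Suc_imp_Ck by blast+
  then have "Ck k (\<lambda>x. f x * E h x + D h x * g x)" for h
    using D(2) E(2) by (intro Ck_add Suc.IH) auto
  moreover have "((\<lambda>x. f x * g x) has_derivative (\<lambda>h. f x * E h x + D h x * g x)) (at x)" for x
    using has_derivative_mult[OF D(1)[rule_format] E(1)[rule_format]] by simp
  ultimately show ?case
    by (intro Ck.simps(2)[THEN iffD2] exI[of _ "\<lambda>h x. f x * E h x + D h x * g x"]) auto
qed

lemma Ck_compose_deriv_tower:
  fixes \<Phi> :: "nat \<Rightarrow> real \<Rightarrow> real"
  assumes deriv: "\<And>n s. (\<Phi> n has_real_derivative \<Phi> (Suc n) s) (at s)"
  shows "Ck k f \<Longrightarrow> Ck k (\<lambda>x. \<Phi> n (f x))"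
proof (induction k arbitrary: f n)
  case 0
  have "continuous_on UNIV (\<Phi> n)"
    using deriv by (blast intro: continuous_at_imp_continuous_on DERIV_continuous)
  then show ?case
    using 0 by (auto intro: continuous_on_compose2[of UNIV "\<Phi> n" UNIV f])
next
  case (Suc k)
  from Suc.prems obtain D where
    D: "\<forall>x. (f has_derivative (\<lambda>h. D h x)) (at x)" "\<forall>h. Ck k (\<lambda>x. D h x)"
    by auto
  have "Ck k f"
    using Suc.prems Ck_Suc_imp_Ck by blast
  have "((\<lambda>x. \<Phi> n (f x)) has_derivative (\<lambda>h. \<Phi> (Suc n) (f x) * D h x)) (at x)" for x
    using has_derivative_compose[OF D(1)[rule_format, of x] deriv[of n "f x", unfolded has_field_derivative_def]]
    by (simp add: o_def)
  moreover have "Ck k (\<lambda>x. \<Phi> (Suc n) (f x) * D h x)" for h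
    using D(2) by (intro Ck_mult Suc.IH \<open>Ck k f\<close>) auto
  ultimately show ?case
    by (intro Ck.simps(2)[THEN iffD2] exI[of _ "\<lambda>h x. \<Phi> (Suc n) (f x) * D h x"]) auto
qed

lemma Ck_inner_left: "Ck k (\<lambda>x. inner x v)"
proof (induction k)
  case (Suc k)
  show ?case
    by (rule Ck.simps(2)[THEN iffD2], rule exI[of _ "\<lambda>h x. inner h v"])
       (auto intro!: derivative_eq_intros simp: Ck_const)
qed (auto intro: continuous_intros)

lemma Ck_minus_dist_sq: "Ck k (\<lambda>x. R - inner (x - a) (x - a))"
proof (rule Ck_Suc_imp_Ck)
  have "Ck k (\<lambda>x. - 2 * inner x h + 2 * inner a h)" for h
    by (intro Ck_add Ck_mult Ck_const Ck_inner_left)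
  moreover have "((\<lambda>x. R - inner (x - a) (x - a)) has_derivative
      (\<lambda>h. - 2 * inner x h + 2 * inner a h)) (at x)" for x
    by (auto intro!: derivative_eq_intros simp: inner_diff_left inner_diff_right inner_commute)
  ultimately show "Ck (Suc k) (\<lambda>x. R - inner (x - a) (x - a))"
    by (intro Ck.simps(2)[THEN iffD2] exI[of _ "\<lambda>h x. - 2 * inner x h + 2 * inner a h"]) auto
qed

lemma smooth_imp_continuous: "smooth f \<Longrightarrow> continuous_on UNIV f"
  unfolding smooth_def using Ck_imp_continuous by blast

lemma smooth_const: "smooth (\<lambda>x. a)"
  unfolding smooth_def by (simp add: Ck_const)

lemma smooth_add: "smooth f \<Longrightarrow> smooth g \<Longrightarrow> smooth (\<lambda>x. f x + g x)"
  unfolding smooth_def by (simp add: Ck_add)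

lemma smooth_mult: "smooth f \<Longrightarrow> smooth g \<Longrightarrow> smooth (\<lambda>x. f x * g x)"
  unfolding smooth_def by (simp add: Ck_mult)

lemma smooth_diff: "smooth f \<Longrightarrow> smooth g \<Longrightarrow> smooth (\<lambda>x. f x - g x)"
  using smooth_add[of f "\<lambda>x. - 1 * g x"] smooth_mult[OF smooth_const, of g "- 1"] by simp

text \<open>\<open>exp_bump_deriv n\<close> is the \<open>n\<close>-th derivative of \<open>s \<mapsto> exp (-1/s)\<close> (\<open>s > 0\<close>), extended
  by \<open>0\<close>: the derivative of \<open>P (1/s) exp (-1/s)\<close> is \<open>(1/s)\<^sup>2 (P - P') (1/s) exp (-1/s)\<close>.\<close>

fun exp_bump_poly :: "nat \<Rightarrow> real poly" where
  "exp_bump_poly 0 = 1"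
| "exp_bump_poly (Suc n) = [:0, 0, 1:] * (exp_bump_poly n - pderiv (exp_bump_poly n))"

definition exp_bump_deriv :: "nat \<Rightarrow> real \<Rightarrow> real" where
  "exp_bump_deriv n s = (if 0 < s then poly (exp_bump_poly n) (1 / s) * exp (- 1 / s) else 0)"

lemma poly_div_exp_tendsto_0: "((\<lambda>u. poly P u / exp u) \<longlongrightarrow> (0::real)) at_top"
proof -
  have "((\<lambda>u. \<Sum>i\<le>degree P. coeff P i * (u ^ i / exp u)) \<longlongrightarrow> (0::real)) at_top"
    by (intro tendsto_null_sum tendsto_mult_right_zero tendsto_power_div_exp_0)
  then show ?thesis
    by (simp add: poly_altdef sum_divide_distrib)
qed

lemma exp_bump_deriv_div_tendsto_0: "((\<lambda>s. exp_bump_deriv n s / s) \<longlongrightarrow> 0) (at 0)"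
proof -
  let ?P = "pCons 0 (exp_bump_poly n)"
  have "((\<lambda>s. poly ?P (inverse s) / exp (inverse s)) \<longlongrightarrow> 0) (at_right 0)"
    by (rule filterlim_compose[OF poly_div_exp_tendsto_0 filterlim_inverse_at_top_right])
  moreover have "poly ?P (inverse s) / exp (inverse s) = exp_bump_deriv n s / s" if "0 < s" for s
    using that by (simp add: exp_bump_deriv_def exp_minus inverse_eq_divide)
  then have "\<forall>\<^sub>F s in at_right 0. poly ?P (inverse s) / exp (inverse s) = exp_bump_deriv n s / s"
    by (simp add: eventually_at_filter)
  ultimately have right: "((\<lambda>s. exp_bump_deriv n s / s) \<longlongrightarrow> 0) (at_right 0)"
    by (simp add: tendsto_cong)
  have "\<forall>\<^sub>F s in at_left 0. exp_bump_deriv n s / s = 0"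
    by (simp add: exp_bump_deriv_def eventually_at_filter)
  from tendsto_cong[OF this] have left: "((\<lambda>s. exp_bump_deriv n s / s) \<longlongrightarrow> 0) (at_left 0)"
    by simp
  show ?thesis
    using right left by (simp add: filterlim_at_split)
qed

lemma has_real_derivative_exp_bump_deriv:
  "(exp_bump_deriv n has_real_derivative exp_bump_deriv (Suc n) s) (at s)"
proof (cases s "0::real" rule: linorder_cases)
  case less
  have "\<forall>\<^sub>F y in nhds s. 0 = exp_bump_deriv n y"
    using eventually_nhds_in_open[of "{..<0}" s] less
    by (auto elim!: eventually_mono simp: exp_bump_deriv_def)
  from DERIV_cong_ev[OF refl this refl] have "(exp_bump_deriv n has_real_derivative 0) (at s)"
    by (metis DERIV_const)
  then show ?thesis
    using less by (simp add: exp_bump_deriv_def)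
next
  case equal
  have "((\<lambda>y. (exp_bump_deriv n y - exp_bump_deriv n 0) / (y - 0)) \<longlongrightarrow> 0) (at 0)"
    using exp_bump_deriv_div_tendsto_0 by (simp add: exp_bump_deriv_def)
  then show ?thesis
    using equal by (simp add: has_field_derivative_iff exp_bump_deriv_def)
next
  case greater
  let ?P = "exp_bump_poly n"
  have deriv: "((\<lambda>y. poly ?P (1 / y) * exp (- 1 / y)) has_real_derivative
      poly (pderiv ?P) (1 / s) * (- 1 / s\<^sup>2) * exp (- 1 / s) + poly ?P (1 / s) * (exp (- 1 / s) * (1 / s\<^sup>2)))
      (at s)"
    using greater
    by (auto intro!: derivative_eq_intros DERIV_chain2[OF poly_DERIV]
             simp: power2_eq_square field_simps)
  have ev: "\<forall>\<^sub>F y in nhds s. poly ?P (1 / y) * exp (- 1 / y) = exp_bump_deriv n y"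
    using eventually_nhds_in_open[of "{0<..}" s] greater
    by (auto elim!: eventually_mono simp: exp_bump_deriv_def)
  have "poly (pderiv ?P) (1 / s) * (- 1 / s\<^sup>2) * exp (- 1 / s)
      + poly ?P (1 / s) * (exp (- 1 / s) * (1 / s\<^sup>2)) = exp_bump_deriv (Suc n) s"
    using greater by (simp add: exp_bump_deriv_def algebra_simps power2_eq_square)
  with DERIV_cong_ev[OF refl ev refl] deriv show ?thesis
    by simp
qed

definition bump :: "'a::euclidean_space \<Rightarrow> real \<Rightarrow> 'a \<Rightarrow> real" where
  "bump a \<rho> x = exp_bump_deriv 0 (\<rho>\<^sup>2 - inner (x - a) (x - a))"

lemma smooth_bump: "smooth (bump a \<rho>)"
  unfolding smooth_def bump_def
  using Ck_compose_deriv_tower[where \<Phi> = exp_bump_deriv, OF has_real_derivative_exp_bump_deriv Ck_minus_dist_sq]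
  by blast

lemma bump_nonneg: "0 \<le> bump a \<rho> x"
  by (simp add: bump_def exp_bump_deriv_def)

lemma bump_le_1: "bump a \<rho> x \<le> 1"
  by (simp add: bump_def exp_bump_deriv_def)

lemma bump_pos_iff: "0 < \<rho> \<Longrightarrow> 0 < bump a \<rho> x \<longleftrightarrow> x \<in> ball a \<rho>"
proof -
  assume "0 < \<rho>"
  have "inner (x - a) (x - a) = (dist a x)\<^sup>2"
    by (metis dist_commute dist_norm power2_norm_eq_inner)
  moreover have "(dist a x)\<^sup>2 < \<rho>\<^sup>2 \<longleftrightarrow> dist a x < \<rho>"
    using \<open>0 < \<rho>\<close> power_mono_iff[of \<rho> "dist a x" 2] by (auto simp: not_le[symmetric])
  ultimately show ?thesis
    by (simp add: bump_def exp_bump_deriv_def)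
qed

section \<open>Integrals and relative entropy\<close>

lemma smooth_densitiesD:
  assumes "q \<in> smooth_densities"
  shows "smooth q" "\<And>x. 0 \<le> q x" "integrable lborel q" "integral\<^sup>L lborel q = 1"
    "continuous_on UNIV q"
  using assms smooth_imp_continuous unfolding smooth_densities_def by auto

lemma pw_nonneg: "0 \<le> x \<Longrightarrow> 0 \<le> pw x a"
  by (simp add: pw_def)

lemma pw_pos_iff: "0 \<le> x \<Longrightarrow> 0 < pw x a \<longleftrightarrow> a = 0 \<or> 0 < x"
  by (auto simp: pw_def)

lemma ln_pw: "0 < x \<or> a = 0 \<Longrightarrow> ln (pw x a) = a * ln x"
  by (auto simp: pw_def ln_powr)

lemma continuous_on_pw:
  assumes "continuous_on S f" "\<And>x. x \<in> S \<Longrightarrow> 0 \<le> f x" "0 \<le> a"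
  shows "continuous_on S (\<lambda>x. pw (f x) a)"
  using assms by (cases "a = 0") (auto simp: pw_def intro: continuous_on_powr')

lemma borel_measurable_lborel_continuous:
  "continuous_on UNIV f \<Longrightarrow> (f :: 'a::euclidean_space \<Rightarrow> real) \<in> borel_measurable lborel"
  by (simp add: borel_measurable_continuous_onI measurable_lborel1)

lemma borel_measurable_bump: "bump a \<rho> \<in> borel_measurable lborel"
  using smooth_bump smooth_imp_continuous borel_measurable_lborel_continuous by blast

lemma abs_bump_le_1: "\<bar>bump a \<rho> x\<bar> \<le> 1"
  using bump_nonneg[of a \<rho> x] bump_le_1[of a \<rho> x] by simp

lemma not_AE_notin_ball:
  assumes "0 < \<rho>"
  shows "\<not> (AE x in lborel. x \<notin> ball (a::'a::euclidean_space) \<rho>)"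
proof
  assume "AE x in lborel. x \<notin> ball a \<rho>"
  then have "emeasure lborel (ball a \<rho>) = 0"
    by (subst (asm) AE_iff_measurable[of "ball a \<rho>"]) auto
  with content_ball_pos[OF assms, of a] show False
    by (simp add: measure_def)
qed

lemma integral_pos_if_pos_on_ball:
  fixes h :: "'a::euclidean_space \<Rightarrow> real"
  assumes "integrable lborel h" "\<And>x. 0 \<le> h x" "0 < \<rho>" "\<And>x. x \<in> ball a \<rho> \<Longrightarrow> 0 < h x"
  shows "0 < integral\<^sup>L lborel h"
proof -
  have "integral\<^sup>L lborel h \<noteq> 0"
  proof
    assume "integral\<^sup>L lborel h = 0"
    then have "AE x in lborel. h x = 0"
      using integral_nonneg_eq_0_iff_AE[OF assms(1)] assms(2) by auto
    then have "AE x in lborel. x \<notin> ball a \<rho>"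
      by (rule AE_mp) (use assms(4) in force)
    with not_AE_notin_ball[OF assms(3)] show False
      by blast
  qed
  moreover have "0 \<le> integral\<^sup>L lborel h"
    using assms(2) by simp
  ultimately show ?thesis
    by simp
qed

lemma integrable_bounded_cball_support:
  fixes h :: "'a::euclidean_space \<Rightarrow> real"
  assumes "h \<in> borel_measurable lborel" "\<And>x. \<bar>h x\<bar> \<le> B * indicator (cball a \<rho>) x"
  shows "integrable lborel h"
proof (rule Bochner_Integration.integrable_bound[OF _ assms(1)])
  show "integrable lborel (\<lambda>x. B * indicator (cball a \<rho>) x :: real)"
    using emeasure_lborel_cball_finite by (intro integrable_mult_right integrable_real_indicator) auto
  show "AE x in lborel. norm (h x) \<le> norm (B * indicator (cball a \<rho>) x :: real)"
    using assms(2) by (auto intro!: AE_I2 order_trans[OF _ abs_ge_self])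
qed

lemma integrable_bounded_mult:
  fixes g h :: "'a \<Rightarrow> real"
  assumes "integrable M g" "h \<in> borel_measurable M" "\<And>x. \<bar>h x\<bar> \<le> B"
  shows "integrable M (\<lambda>x. h x * g x)"
proof (rule Bochner_Integration.integrable_bound[of _ "\<lambda>x. B * g x"])
  show "integrable M (\<lambda>x. B * g x)"
    using assms(1) by simp
  show "(\<lambda>x. h x * g x) \<in> borel_measurable M"
    using assms(1,2) by measurable
  have "0 \<le> B"
    using assms(3) abs_ge_zero order_trans by blast
  moreover have "\<bar>h x\<bar> * \<bar>g x\<bar> \<le> B * \<bar>g x\<bar>" for x
    using assms(3) by (intro mult_right_mono) auto
  ultimately show "AE x in M. norm (h x * g x) \<le> norm (B * g x)"
    by (auto simp: abs_mult)
qed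

lemma eq_0_if_linear_plus_square_nonneg:
  fixes I \<delta> :: real
  assumes "0 < \<delta>" "\<And>t. \<bar>t\<bar> \<le> \<delta> \<Longrightarrow> 0 \<le> t * I + t\<^sup>2"
  shows "I = 0"
proof (rule ccontr)
  assume "I \<noteq> 0"
  define s where "s = min \<delta> (\<bar>I\<bar> / 2)"
  have s: "0 < s" "s \<le> \<delta>" "s \<le> \<bar>I\<bar> / 2"
    using \<open>I \<noteq> 0\<close> assms(1) by (auto simp: s_def)
  have "0 \<le> (- sgn I * s) * I + (- sgn I * s)\<^sup>2"
    using assms(2)[of "- sgn I * s"] s by (simp add: abs_mult)
  also have "\<dots> = s * (s - \<bar>I\<bar>)"
    using \<open>I \<noteq> 0\<close> by (simp add: power2_eq_square sgn_mult_abs algebra_simps abs_sgn)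
  also have "\<dots> < 0"
    using s \<open>I \<noteq> 0\<close> by (simp add: mult_pos_neg)
  finally show False
    by simp
qed

lemma eventually_nhds_imp_ball: "eventually P (nhds x) \<Longrightarrow> \<exists>e>0. \<forall>y\<in>ball x e. P y"
  by (auto simp: eventually_nhds_metric dist_commute)

lemma eventually_less_isCont:
  fixes f :: "'a::t2_space \<Rightarrow> real"
  shows "isCont f x \<Longrightarrow> c < f x \<Longrightarrow> eventually (\<lambda>y. c < f y) (nhds x)"
  by (rule order_tendstoD(1)) (simp_all add: isCont_def tendsto_at_iff_tendsto_nhds)

lemma eventually_greater_isCont:
  fixes f :: "'a::t2_space \<Rightarrow> real"
  shows "isCont f x \<Longrightarrow> f x < c \<Longrightarrow> eventually (\<lambda>y. f y < c) (nhds x)"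
  by (rule order_tendstoD(2)) (simp_all add: isCont_def tendsto_at_iff_tendsto_nhds)

lemma smooth_imp_isCont: "smooth f \<Longrightarrow> isCont f x"
  using smooth_imp_continuous continuous_on_eq_continuous_at[OF open_UNIV] by blast

lemma isCont_eq_0_if_bump_integrals_0:
  fixes h :: "'a::euclidean_space \<Rightarrow> real"
  assumes "isCont h x" and int: "\<And>e. integrable lborel (\<lambda>y. bump x e y * h y)"
    and zero: "\<And>e. 0 < e \<Longrightarrow> (\<integral>y. bump x e y * h y \<partial>lborel) = 0"
  shows "h x = 0"
proof (rule ccontr)
  assume "h x \<noteq> 0"
  define \<sigma> where "\<sigma> = sgn (h x)"
  have "0 < \<sigma> * h x"
    using \<open>h x \<noteq> 0\<close> by (simp add: \<sigma>_def mult.commute[of "sgn _"] abs_sgn[symmetric])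
  moreover have "isCont (\<lambda>y. \<sigma> * h y) x"
    using assms(1) by (intro continuous_intros)
  ultimately obtain e where "0 < e" and pos: "\<forall>y\<in>ball x e. 0 < \<sigma> * h y"
    using eventually_nhds_imp_ball[OF eventually_less_isCont] by blast
  have pos_ball: "0 < \<sigma> * (bump x e y * h y)" if "y \<in> ball x e" for y
    using pos that bump_pos_iff[OF \<open>0 < e\<close>, of x y] mult_pos_pos[of "bump x e y" "\<sigma> * h y"]
    by (simp add: ac_simps)
  moreover have "0 \<le> \<sigma> * (bump x e y * h y)" for y
  proof (cases "y \<in> ball x e")
    case False
    then have "bump x e y = 0"
      using bump_pos_iff[OF \<open>0 < e\<close>, of x y] bump_nonneg[of x e y] by simp
    then show ?thesis
      by simp
  qed (use pos_ball in \<open>simp add: less_imp_le\<close>)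
  ultimately have "0 < (\<integral>y. \<sigma> * (bump x e y * h y) \<partial>lborel)"
    using integrable_mult_right[OF int] \<open>0 < e\<close> by (intro integral_pos_if_pos_on_ball) auto
  then show False
    using zero[OF \<open>0 < e\<close>] by simp
qed

lemma entropy_finite_iff_KL_finite_1: "entropy_finite q \<longleftrightarrow> KL_finite q (\<lambda>_. 1)"
  by (simp add: entropy_finite_def KL_finite_def)

lemma abs_mult_ln_le:
  fixes x :: real
  assumes "0 \<le> x"
  shows "\<bar>x * ln x\<bar> \<le> x\<^sup>2 + 1"
proof (cases "x \<le> 1")
  case True
  show ?thesis
  proof (cases "x = 0")
    case False
    then have "0 < x"
      using assms by simp
    have "- (x * ln x) \<le> 1 - x"
      using mult_left_mono[OF ln_le_minus_one[of "1 / x"], of x] \<open>0 < x\<close>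
      by (simp add: ln_div right_diff_distrib)
    moreover have "x * ln x \<le> 0"
      using \<open>0 < x\<close> True by (simp add: mult_nonneg_nonpos)
    ultimately show ?thesis
      using \<open>0 < x\<close> by (simp add: abs_of_nonpos) (use zero_le_power2[of x] in linarith)
  qed simp
next
  case False
  then have "0 \<le> x * ln x" "x * ln x \<le> x * (x - 1)"
    by (auto intro: mult_left_mono ln_le_minus_one)
  then show ?thesis
    using False by (simp add: power2_eq_square algebra_simps)
qed

lemma KL_finite_mult_bounded:
  assumes KL: "KL_finite q s" and q: "integrable lborel q" "\<And>x. 0 \<le> q x"
    and w: "w \<in> borel_measurable lborel" "0 < a" "\<And>x. a \<le> w x" "\<And>x. w x \<le> b"
    and s: "s \<in> borel_measurable lborel"
  shows "KL_finite (\<lambda>x. q x * w x) s"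
  unfolding KL_finite_def
proof
  note [measurable] = borel_measurable_integrable[OF q(1)] w(1) s
  have pos: "AE x in lborel. 0 < q x \<longrightarrow> 0 < s x"
    using KL by (simp add: KL_finite_def)
  have w_pos: "0 < w x" for x
    using w(2,3) less_le_trans by blast
  have "0 < q x * w x \<longleftrightarrow> 0 < q x" for x
    using w_pos[of x] by (simp add: zero_less_mult_iff)
  then show "AE x in lborel. 0 < q x * w x \<longrightarrow> 0 < s x"
    using pos by simp
  have "\<bar>w x\<bar> \<le> b" for x
    using w(2) w(3,4)[of x] by simp
  then have "integrable lborel (\<lambda>x. w x * (q x * ln (q x / s x)))"
    using KL w(1) by (rule_tac integrable_bounded_mult) (auto simp: KL_finite_def)
  moreover have "\<bar>w x * ln (w x)\<bar> \<le> b * (\<bar>ln a\<bar> + \<bar>ln b\<bar>)" for x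
  proof -
    have "ln a \<le> ln (w x)" "ln (w x) \<le> ln b"
      using w(2) w(3,4)[of x] by auto
    then have "\<bar>ln (w x)\<bar> \<le> \<bar>ln a\<bar> + \<bar>ln b\<bar>"
      by linarith
    then show ?thesis
      using w(2) w(3,4)[of x] unfolding abs_mult by (intro mult_mono) auto
  qed
  then have "integrable lborel (\<lambda>x. (w x * ln (w x)) * q x)"
    using q(1) by (intro integrable_bounded_mult) auto
  ultimately have int: "integrable lborel (\<lambda>x. w x * (q x * ln (q x / s x)) + (w x * ln (w x)) * q x)"
    by (rule Bochner_Integration.integrable_add)
  have AE_eq: "AE x in lborel. w x * (q x * ln (q x / s x)) + (w x * ln (w x)) * q x
      = q x * w x * ln (q x * w x / s x)"
    using pos
  proof eventually_elim
    case (elim x)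
    show ?case
    proof (cases "q x = 0")
      case False
      then have "0 < q x" "0 < s x" "0 < w x"
        using elim q(2)[of x] w_pos[of x] by (auto simp: order_le_less)
      then show ?thesis
        by (simp add: ln_div ln_mult algebra_simps)
    qed simp
  qed
  have "(\<lambda>x. q x * w x * ln (q x * w x / s x)) \<in> borel_measurable lborel"
    by measurable
  from integrable_cong_AE_imp[OF int this AE_eq]
  show "integrable lborel (\<lambda>x. q x * w x * ln (q x * w x / s x))" .
qed

lemma KL_finite_bounded_support:
  fixes g s :: "'a::euclidean_space \<Rightarrow> real"
  assumes g: "g \<in> borel_measurable lborel" "\<And>x. 0 \<le> g x" "\<And>x. g x \<le> G"
      "\<And>x. 0 < g x \<Longrightarrow> x \<in> ball c \<rho>"
    and s: "s \<in> borel_measurable lborel" "0 < a" "\<And>x. x \<in> ball c \<rho> \<Longrightarrow> a \<le> s x \<and> s x \<le> b"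
  shows "KL_finite g s"
  unfolding KL_finite_def
proof
  note [measurable] = g(1) s(1)
  show "AE x in lborel. 0 < g x \<longrightarrow> 0 < s x"
    using g(4) s(2,3) by (force intro: AE_I2)
  define B where "B = G\<^sup>2 + 1 + G * (\<bar>ln a\<bar> + \<bar>ln b\<bar>)"
  have "0 \<le> G"
    using g(2,3) order_trans by blast
  have "\<bar>g x * ln (g x / s x)\<bar> \<le> B * indicator (cball c \<rho>) x" for x
  proof (cases "g x = 0")
    case True
    then show ?thesis
      using \<open>0 \<le> G\<close> by (simp add: B_def)
  next
    case False
    then have "0 < g x" "x \<in> ball c \<rho>"
      using g(2,4) by (auto simp: order_le_less)
    then have "a \<le> s x" "s x \<le> b" "0 < s x"
      using s(2,3) by force+
    then have "ln a \<le> ln (s x)" "ln (s x) \<le> ln b"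
      using s(2) by auto
    then have "\<bar>ln (s x)\<bar> \<le> \<bar>ln a\<bar> + \<bar>ln b\<bar>"
      by linarith
    then have "g x * \<bar>ln (s x)\<bar> \<le> G * (\<bar>ln a\<bar> + \<bar>ln b\<bar>)"
      using g(2,3) \<open>0 \<le> G\<close> by (intro mult_mono) auto
    moreover have "\<bar>g x * ln (g x)\<bar> \<le> G\<^sup>2 + 1"
      using abs_mult_ln_le[OF g(2)] power_mono[OF g(3)[of x] g(2)[of x], of 2] by (smt (verit))
    moreover have "\<bar>g x * ln (g x / s x)\<bar> \<le> \<bar>g x * ln (g x)\<bar> + g x * \<bar>ln (s x)\<bar>"
      using \<open>0 < g x\<close> \<open>0 < s x\<close> abs_triangle_ineq4[of "g x * ln (g x)" "g x * ln (s x)"]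
      by (simp add: ln_div right_diff_distrib abs_mult)
    ultimately show ?thesis
      using \<open>0 < g x\<close> \<open>x \<in> ball c \<rho>\<close> by (simp add: B_def abs_mult)
  qed
  then show "integrable lborel (\<lambda>x. g x * ln (g x / s x))"
    by (intro integrable_bounded_cball_support) measurable
qed

lemma integrable_bump:
  assumes "0 < \<rho>"
  shows "integrable lborel (bump a \<rho>)"
proof (rule integrable_bounded_cball_support[OF borel_measurable_bump])
  show "\<bar>bump a \<rho> x\<bar> \<le> 1 * indicator (cball a \<rho>) x" for x
  proof (cases "x \<in> ball a \<rho>")
    case False
    then have "bump a \<rho> x = 0"
      using bump_pos_iff[OF assms, of a x] bump_nonneg[of a \<rho> x] by simp
    then show ?thesis
      by simp
  qed (use abs_bump_le_1 in auto)
qed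

lemma integral_bump_pos: "0 < \<rho> \<Longrightarrow> 0 < integral\<^sup>L lborel (bump a \<rho>)"
  by (rule integral_pos_if_pos_on_ball[OF integrable_bump bump_nonneg]) (auto simp: bump_pos_iff)

definition bump_density :: "'a::euclidean_space \<Rightarrow> real \<Rightarrow> 'a \<Rightarrow> real" where
  "bump_density a \<rho> x = bump a \<rho> x / integral\<^sup>L lborel (bump a \<rho>)"

lemma bump_density_smooth_densities: "0 < \<rho> \<Longrightarrow> bump_density a \<rho> \<in> smooth_densities"
  using integrable_bump integral_bump_pos[of \<rho> a] smooth_mult[OF smooth_bump smooth_const]
  by (auto simp: smooth_densities_def bump_density_def[abs_def] divide_inverse bump_nonneg)

lemma bump_density_pos_iff:
  assumes "0 < \<rho>"
  shows "0 < bump_density a \<rho> x \<longleftrightarrow> x \<in> ball a \<rho>"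
  using bump_pos_iff[OF assms, of a x] integral_bump_pos[OF assms, of a]
  by (auto simp: bump_density_def zero_less_divide_iff)

lemma KL_finite_bump_density:
  assumes "0 < \<rho>" "s \<in> borel_measurable lborel" "0 < c" "\<And>x. x \<in> ball a \<rho> \<Longrightarrow> c \<le> s x \<and> s x \<le> C"
  shows "KL_finite (bump_density a \<rho>) s"
proof (rule KL_finite_bounded_support[OF _ _ _ _ assms(2,3,4)])
  show "bump_density a \<rho> \<in> borel_measurable lborel"
    unfolding bump_density_def[abs_def] using borel_measurable_bump by measurable
  show "0 \<le> bump_density a \<rho> x" "bump_density a \<rho> x \<le> 1 / integral\<^sup>L lborel (bump a \<rho>)" for x
    using bump_nonneg[of a \<rho> x] bump_le_1[of a \<rho> x] integral_bump_pos[OF assms(1), of a]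
    by (auto simp: bump_density_def divide_right_mono)
  show "0 < bump_density a \<rho> x \<Longrightarrow> x \<in> ball a \<rho>" for x
    using bump_density_pos_iff[OF assms(1)] by blast
qed

lemma KL_mix_disjoint:
  assumes KL: "KL_finite q s" "KL_finite g s"
    and q: "integrable lborel q" "\<And>x. 0 \<le> q x" and g: "integrable lborel g" "\<And>x. 0 \<le> g x"
    and disjoint: "\<And>x. 0 < g x \<Longrightarrow> q x = 0"
    and s: "s \<in> borel_measurable lborel" and t: "0 < t" "t < 1"
  defines "m \<equiv> \<lambda>x. (1 - t) * q x + t * g x"
  shows "KL_finite m s"
    and "KL m s = (1 - t) * KL q s + t * KL g s
      + (1 - t) * ln (1 - t) * integral\<^sup>L lborel q + t * ln t * integral\<^sup>L lborel g"
proof -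
  note [measurable] = borel_measurable_integrable[OF q(1)] borel_measurable_integrable[OF g(1)] s
  have pos: "AE x in lborel. (0 < q x \<longrightarrow> 0 < s x) \<and> (0 < g x \<longrightarrow> 0 < s x)"
    using KL by (auto simp: KL_finite_def)
  have int: "integrable lborel (\<lambda>x. q x * ln (q x / s x))" "integrable lborel (\<lambda>x. g x * ln (g x / s x))"
    using KL by (auto simp: KL_finite_def)
  let ?R = "\<lambda>x. (1 - t) * (q x * ln (q x / s x)) + t * (g x * ln (g x / s x))
      + (1 - t) * ln (1 - t) * q x + t * ln t * g x"
  have AE_eq: "AE x in lborel. ?R x = m x * ln (m x / s x)"
    using pos
  proof eventually_elim
    case (elim x)
    consider "q x = 0" "g x = 0" | "0 < q x" "g x = 0" | "0 < g x" "q x = 0"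
      using q(2)[of x] g(2)[of x] disjoint[of x] by (auto simp: order_le_less)
    then show ?case
    proof cases
      case 2
      then have "ln ((1 - t) * q x / s x) = ln (1 - t) + ln (q x / s x)"
        using elim t by (simp add: ln_div ln_mult)
      then show ?thesis
        using 2 by (simp add: m_def algebra_simps)
    next
      case 3
      then have "ln (t * g x / s x) = ln t + ln (g x / s x)"
        using elim t by (simp add: ln_div ln_mult)
      then show ?thesis
        using 3 by (simp add: m_def algebra_simps)
    qed (simp add: m_def)
  qed
  have int_R: "integrable lborel ?R"
    using int q(1) g(1) by simp
  have meas: "(\<lambda>x. m x * ln (m x / s x)) \<in> borel_measurable lborel"
    unfolding m_def by measurable
  have "AE x in lborel. 0 < m x \<longrightarrow> 0 < s x"
    using pos
  proof eventually_elim
    case (elim x)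
    have "m x = 0" if "q x = 0" "g x = 0"
      using that by (simp add: m_def)
    then show ?case
      using elim q(2)[of x] g(2)[of x] by (auto simp: order_le_less)
  qed
  then show "KL_finite m s"
    unfolding KL_finite_def using integrable_cong_AE_imp[OF int_R meas AE_eq] by blast
  have "KL m s = integral\<^sup>L lborel ?R"
    unfolding KL_def using AE_eq by (intro integral_cong_AE[OF meas]) (auto simp: eq_commute)
  also have "\<dots> = (1 - t) * KL q s + t * KL g s
      + (1 - t) * ln (1 - t) * integral\<^sup>L lborel q + t * ln t * integral\<^sup>L lborel g"
    using int q(1) g(1) by (simp add: KL_def)
  finally show "KL m s = (1 - t) * KL q s + t * KL g s
      + (1 - t) * ln (1 - t) * integral\<^sup>L lborel q + t * ln t * integral\<^sup>L lborel g" .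
qed

lemma KL_ge_minus_ln_integral:
  assumes KL: "KL_finite q r"
    and q: "integrable lborel q" "integral\<^sup>L lborel q = 1" "\<And>x. 0 \<le> q x"
    and r: "integrable lborel r" "\<And>x. 0 \<le> r x" "0 < integral\<^sup>L lborel r"
  shows "- ln (integral\<^sup>L lborel r) \<le> KL q r"
proof -
  define Z where "Z = integral\<^sup>L lborel r"
  have "0 < Z"
    using r(3) by (simp add: Z_def)
  have "(\<integral>x. q x - r x / Z - q x * ln Z \<partial>lborel) \<le> KL q r"
    unfolding KL_def
  proof (rule integral_mono_AE)
    show "integrable lborel (\<lambda>x. q x - r x / Z - q x * ln Z)"
      using q(1) r(1) by simp
    show "integrable lborel (\<lambda>x. q x * ln (q x / r x))"
      using KL by (simp add: KL_finite_def)
    have "AE x in lborel. 0 < q x \<longrightarrow> 0 < r x"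
      using KL by (simp add: KL_finite_def)
    then show "AE x in lborel. q x - r x / Z - q x * ln Z \<le> q x * ln (q x / r x)"
    proof eventually_elim
      case (elim x)
      show ?case
      proof (cases "q x = 0")
        case True
        then show ?thesis
          using r(2)[of x] \<open>0 < Z\<close> by simp
      next
        case False
        then have "0 < q x" "0 < r x"
          using q(3)[of x] elim by auto
        have "q x * ln (r x / (q x * Z)) \<le> q x * (r x / (q x * Z) - 1)"
          using \<open>0 < q x\<close> \<open>0 < r x\<close> \<open>0 < Z\<close> by (intro mult_left_mono ln_le_minus_one) auto
        moreover have "q x * ln (r x / (q x * Z)) = - (q x * ln (q x / r x)) - q x * ln Z"
          using \<open>0 < q x\<close> \<open>0 < r x\<close> \<open>0 < Z\<close> by (simp add: ln_div ln_mult algebra_simps)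
        moreover have "q x * (r x / (q x * Z) - 1) = r x / Z - q x"
          using \<open>0 < q x\<close> by (simp add: field_simps)
        ultimately show ?thesis
          by linarith
      qed
    qed
  qed
  moreover have "(\<integral>x. q x - r x / Z - q x * ln Z \<partial>lborel) = - ln Z"
    using q(1,2) r(1) \<open>0 < Z\<close> by (simp add: Z_def)
  ultimately show ?thesis
    by (simp add: Z_def)
qed

lemma KL_normalized_self:
  assumes "\<And>x. 0 \<le> r x" "0 < integral\<^sup>L lborel r"
  shows "KL (\<lambda>x. r x / integral\<^sup>L lborel r) r = - ln (integral\<^sup>L lborel r)"
proof -
  define Z where "Z = integral\<^sup>L lborel r"
  have "r x / Z * ln (r x / Z / r x) = - ln Z / Z * r x" for x
    using assms(1)[of x] assms(2) by (cases "r x = 0") (auto simp: Z_def ln_div)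
  then have "KL (\<lambda>x. r x / Z) r = - ln Z / Z * Z"
    by (simp add: KL_def Z_def)
  then show ?thesis
    using assms(2) by (simp add: Z_def)
qed

lemma KL_mult_le:
  assumes KL: "KL_finite q r" "KL_finite (\<lambda>x. q x * w x) r"
    and q: "integrable lborel q" "\<And>x. 0 \<le> q x"
    and w: "w \<in> borel_measurable lborel" "\<And>x. 0 < w x" "\<And>x. w x \<le> b"
  shows "KL (\<lambda>x. q x * w x) r \<le>
    (\<integral>x. w x * (q x * ln (q x / r x)) \<partial>lborel) + (\<integral>x. (w x - 1 + (w x - 1)\<^sup>2) * q x \<partial>lborel)"
proof -
  have "\<bar>w x - 1 + (w x - 1)\<^sup>2\<bar> \<le> b + 1 + (b + 1)\<^sup>2" for x
  proof -
    have "\<bar>w x - 1\<bar> \<le> b + 1"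
      using w(2,3)[of x] by simp
    then have "(w x - 1)\<^sup>2 \<le> (b + 1)\<^sup>2"
      by (metis abs_ge_zero power2_abs power_mono)
    then show ?thesis
      using \<open>\<bar>w x - 1\<bar> \<le> b + 1\<close> w(2,3)[of x] zero_le_power2[of "w x - 1"]
      unfolding abs_le_iff by (intro conjI) linarith+
  qed
  then have int2: "integrable lborel (\<lambda>x. (w x - 1 + (w x - 1)\<^sup>2) * q x)"
    using q(1) w(1) by (rule_tac integrable_bounded_mult) auto
  have "\<bar>w x\<bar> \<le> b" for x
    using w(2,3)[of x] by simp
  then have int1: "integrable lborel (\<lambda>x. w x * (q x * ln (q x / r x)))"
    using KL(1) w(1) by (rule_tac integrable_bounded_mult) (auto simp: KL_finite_def)
  have "KL (\<lambda>x. q x * w x) r \<le>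
      (\<integral>x. w x * (q x * ln (q x / r x)) + (w x - 1 + (w x - 1)\<^sup>2) * q x \<partial>lborel)"
    unfolding KL_def
  proof (rule integral_mono_AE)
    show "integrable lborel (\<lambda>x. q x * w x * ln (q x * w x / r x))"
      using KL(2) by (simp add: KL_finite_def)
    show "integrable lborel (\<lambda>x. w x * (q x * ln (q x / r x)) + (w x - 1 + (w x - 1)\<^sup>2) * q x)"
      using int1 int2 by simp
    have "AE x in lborel. 0 < q x \<longrightarrow> 0 < r x"
      using KL(1) by (simp add: KL_finite_def)
    then show "AE x in lborel. q x * w x * ln (q x * w x / r x)
        \<le> w x * (q x * ln (q x / r x)) + (w x - 1 + (w x - 1)\<^sup>2) * q x"
    proof eventually_elim
      case (elim x)
      show ?case
      proof (cases "q x = 0")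
        case False
        then have "0 < q x" "0 < r x" "0 < w x"
          using elim q(2)[of x] w(2)[of x] by (auto simp: order_le_less)
        have "q x * w x * ln (q x * w x / r x) = w x * (q x * ln (q x / r x)) + w x * ln (w x) * q x"
          using \<open>0 < q x\<close> \<open>0 < r x\<close> \<open>0 < w x\<close> by (simp add: ln_div ln_mult algebra_simps)
        moreover have "w x * ln (w x) \<le> w x * (w x - 1)"
          using \<open>0 < w x\<close> by (intro mult_left_mono ln_le_minus_one) auto
        then have "w x * ln (w x) * q x \<le> (w x - 1 + (w x - 1)\<^sup>2) * q x"
          using \<open>0 < q x\<close> by (intro mult_right_mono) (auto simp: power2_eq_square algebra_simps)
        ultimately show ?thesis
          by linarith
      qed simp
    qed
  qed
  then show ?thesis
    using int1 int2 by simp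
qed

section \<open>Minimizing relative entropy over a class closed under perturbations\<close>

locale KL_admissible =
  fixes r :: "'a::euclidean_space \<Rightarrow> real" and D :: "('a \<Rightarrow> real) set"
  assumes continuous_r: "continuous_on UNIV r"
    and r_nonneg: "\<And>x. 0 \<le> r x"
    and D_smooth_densities: "D \<subseteq> smooth_densities"
    and KL_finite_D: "q \<in> D \<Longrightarrow> KL_finite q r"
    and D_mult_closed: "q \<in> D \<Longrightarrow> smooth w \<Longrightarrow> 0 < a \<Longrightarrow> (\<And>x. a \<le> w x \<and> w x \<le> b) \<Longrightarrow>
      integral\<^sup>L lborel (\<lambda>x. q x * w x) = 1 \<Longrightarrow> (\<lambda>x. q x * w x) \<in> D"
    and D_mix_closed: "q \<in> D \<Longrightarrow> g \<in> D \<Longrightarrow> (\<And>x. 0 < g x \<Longrightarrow> q x = 0) \<Longrightarrow> 0 < t \<Longrightarrow> t < 1 \<Longrightarrow>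
      (\<lambda>x. (1 - t) * q x + t * g x) \<in> D"
    and D_localized: "0 < r x \<Longrightarrow> 0 < e \<Longrightarrow> \<exists>g\<in>D. \<forall>y. 0 < g y \<longrightarrow> y \<in> ball x e"
begin

definition KL_minimizer :: "('a \<Rightarrow> real) \<Rightarrow> bool" where
  "KL_minimizer q \<longleftrightarrow> q \<in> D \<and> (\<forall>q'\<in>D. KL q r \<le> KL q' r)"

lemma isCont_r: "isCont r x"
  using continuous_r continuous_on_eq_continuous_at[OF open_UNIV] by blast

lemma borel_measurable_r [measurable]: "r \<in> borel_measurable lborel"
  using continuous_r by (rule borel_measurable_lborel_continuous)

lemma D_densityD:
  assumes "q \<in> D"
  shows "smooth q" "\<And>x. 0 \<le> q x" "integrable lborel q" "integral\<^sup>L lborel q = 1"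
    "\<And>x. isCont q x" "KL_finite q r" "integrable lborel (\<lambda>x. q x * ln (q x / r x))"
  using assms D_smooth_densities smooth_densitiesD[of q] smooth_imp_isCont KL_finite_D[of q]
  by (auto simp: KL_finite_def)

lemma KL_minimizer_perturbation:
  assumes "KL_minimizer q" and \<psi>: "smooth \<psi>" "\<And>x. \<bar>\<psi> x\<bar> \<le> 1" "(\<integral>x. \<psi> x * q x \<partial>lborel) = 0"
    and t: "\<bar>t\<bar> \<le> 1/2"
  shows "0 \<le> t * (\<integral>x. \<psi> x * (q x * ln (q x / r x)) \<partial>lborel) + t\<^sup>2"
proof -
  have "q \<in> D" and min: "\<And>q'. q' \<in> D \<Longrightarrow> KL q r \<le> KL q' r"
    using assms(1) by (auto simp: KL_minimizer_def)
  note q = D_densityD[OF \<open>q \<in> D\<close>]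
  have [measurable]: "\<psi> \<in> borel_measurable lborel"
    using \<psi>(1) smooth_imp_continuous borel_measurable_lborel_continuous by blast
  define f where "f x = q x * ln (q x / r x)" for x
  define w where "w x = 1 + t * \<psi> x" for x
  have w_bounds: "1/2 \<le> w x \<and> w x \<le> 3/2" for x
  proof -
    have "\<bar>t * \<psi> x\<bar> \<le> 1/2"
      using mult_mono[OF t \<psi>(2)[of x]] by (simp add: abs_mult)
    from abs_le_D1[OF this] abs_le_D2[OF this] show ?thesis
      unfolding w_def by linarith
  qed
  have \<psi>2_abs: "\<bar>(\<psi> x)\<^sup>2\<bar> \<le> 1" for x
    using \<psi>(2)[of x] by (simp add: abs_square_le_1)
  have int_\<psi>q: "integrable lborel (\<lambda>x. \<psi> x * q x)" and int_\<psi>f: "integrable lborel (\<lambda>x. \<psi> x * f x)"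
    and int_\<psi>2q: "integrable lborel (\<lambda>x. (\<psi> x)\<^sup>2 * q x)"
    using q(3,7) \<psi>(2) \<psi>2_abs by (auto simp: f_def intro!: integrable_bounded_mult)
  have "(\<integral>x. (\<psi> x)\<^sup>2 * q x \<partial>lborel) \<le> integral\<^sup>L lborel q"
    using int_\<psi>2q q(2,3) \<psi>2_abs by (intro integral_mono) (auto simp: mult_left_le_one_le)
  then have \<psi>2q: "(\<integral>x. (\<psi> x)\<^sup>2 * q x \<partial>lborel) \<le> 1"
    using q(4) by simp
  have "(\<lambda>x. q x * w x) = (\<lambda>x. q x + t * (\<psi> x * q x))"
    by (simp add: w_def fun_eq_iff algebra_simps)
  then have "integral\<^sup>L lborel (\<lambda>x. q x * w x) = 1"
    using int_\<psi>q q(3,4) \<psi>(3) by simp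
  then have qw_D: "(\<lambda>x. q x * w x) \<in> D"
    using w_bounds \<open>q \<in> D\<close> \<psi>(1)
    by (intro D_mult_closed[where a = "1/2" and b = "3/2"])
      (auto simp: w_def intro!: smooth_add smooth_mult smooth_const)
  then have "KL q r \<le> KL (\<lambda>x. q x * w x) r"
    by (rule min)
  also have "\<dots> \<le> (\<integral>x. w x * f x \<partial>lborel) + (\<integral>x. (w x - 1 + (w x - 1)\<^sup>2) * q x \<partial>lborel)"
  proof -
    have "w \<in> borel_measurable lborel"
      unfolding w_def by measurable
    moreover have "0 < w x" "w x \<le> 3/2" for x
      using w_bounds[of x] by auto
    ultimately show ?thesis
      unfolding f_def by (rule KL_mult_le[OF q(6) KL_finite_D[OF qw_D] q(3,2)])
  qed
  also have "\<dots> = KL q r + t * (\<integral>x. \<psi> x * f x \<partial>lborel) + t\<^sup>2 * (\<integral>x. (\<psi> x)\<^sup>2 * q x \<partial>lborel)"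
  proof -
    have "(\<lambda>x. w x * f x) = (\<lambda>x. f x + t * (\<psi> x * f x))"
      by (simp add: w_def fun_eq_iff algebra_simps)
    moreover have "(\<lambda>x. (w x - 1 + (w x - 1)\<^sup>2) * q x) = (\<lambda>x. t * (\<psi> x * q x) + t\<^sup>2 * ((\<psi> x)\<^sup>2 * q x))"
      by (simp add: w_def fun_eq_iff power2_eq_square algebra_simps)
    ultimately show ?thesis
      using q(7) int_\<psi>f int_\<psi>q int_\<psi>2q \<psi>(3) by (simp add: KL_def f_def)
  qed
  also have "\<dots> \<le> KL q r + t * (\<integral>x. \<psi> x * f x \<partial>lborel) + t\<^sup>2"
    using \<psi>2q by (simp add: mult_left_le)
  finally show ?thesis
    by (simp add: f_def)
qed

lemma KL_minimizer_first_variation: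
  assumes "KL_minimizer q" and \<phi>: "smooth \<phi>" "\<And>x. 0 \<le> \<phi> x" "\<And>x. \<phi> x \<le> 1"
  shows "(\<integral>x. \<phi> x * (q x * ln (q x / r x)) \<partial>lborel) = (\<integral>x. \<phi> x * q x \<partial>lborel) * KL q r"
proof -
  have "q \<in> D"
    using assms(1) by (simp add: KL_minimizer_def)
  note q = D_densityD[OF this]
  have [measurable]: "\<phi> \<in> borel_measurable lborel"
    using \<phi>(1) smooth_imp_continuous borel_measurable_lborel_continuous by blast
  define \<mu> where "\<mu> = (\<integral>x. \<phi> x * q x \<partial>lborel)"
  have int_\<phi>q: "integrable lborel (\<lambda>x. \<phi> x * q x)"
    and int_\<phi>f: "integrable lborel (\<lambda>x. \<phi> x * (q x * ln (q x / r x)))"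
    using q(3,7) \<phi>(2,3) by (auto intro!: integrable_bounded_mult)
  have "\<mu> \<le> integral\<^sup>L lborel q"
    unfolding \<mu>_def using int_\<phi>q q(2,3) \<phi>(2,3) by (intro integral_mono) (auto simp: mult_left_le_one_le)
  moreover have "0 \<le> \<mu>"
    unfolding \<mu>_def using \<phi>(2) q(2) by simp
  ultimately have "\<bar>\<phi> x - \<mu>\<bar> \<le> 1" for x
    using q(4) \<phi>(2,3)[of x] by (simp add: abs_le_iff)
  moreover have "(\<integral>x. (\<phi> x - \<mu>) * q x \<partial>lborel) = 0"
    using int_\<phi>q q(3,4) by (simp add: left_diff_distrib \<mu>_def)
  ultimately have "0 \<le> t * (\<integral>x. (\<phi> x - \<mu>) * (q x * ln (q x / r x)) \<partial>lborel) + t\<^sup>2"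
    if "\<bar>t\<bar> \<le> 1/2" for t
    using assms(1) \<phi>(1) that by (intro KL_minimizer_perturbation smooth_diff smooth_const)
  then have "(\<integral>x. (\<phi> x - \<mu>) * (q x * ln (q x / r x)) \<partial>lborel) = 0"
    by (intro eq_0_if_linear_plus_square_nonneg[of "1/2"]) auto
  then show ?thesis
    using int_\<phi>f q(7) by (simp add: \<mu>_def left_diff_distrib KL_def)
qed

lemma KL_minimizer_proportional:
  assumes "KL_minimizer q" "0 < q x" "0 < r x"
  shows "q x = exp (KL q r) * r x"
proof -
  have "q \<in> D"
    using assms(1) by (simp add: KL_minimizer_def)
  note q = D_densityD[OF this]
  define h where "h y = q y * (ln (q y / r y) - KL q r)" for y
  have "isCont h x"
    unfolding h_def using q(5) isCont_r assms(2,3) by (intro continuous_intros) auto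
  have int: "integrable lborel (\<lambda>y. bump x e y * (q y * ln (q y / r y)))"
      "integrable lborel (\<lambda>y. bump x e y * q y)" for e
    using q(3,7) by (auto intro!: integrable_bounded_mult borel_measurable_bump abs_bump_le_1)
  have h_eq: "(\<lambda>y. bump x e y * h y)
      = (\<lambda>y. bump x e y * (q y * ln (q y / r y)) - KL q r * (bump x e y * q y))" for e
    by (simp add: h_def fun_eq_iff algebra_simps)
  have "integrable lborel (\<lambda>y. bump x e y * h y)"
    and "(\<integral>y. bump x e y * h y \<partial>lborel) = 0" for e
    using KL_minimizer_first_variation[OF assms(1) smooth_bump bump_nonneg bump_le_1, of x e] int[of e]
    by (simp_all add: h_eq)
  with \<open>isCont h x\<close> have "h x = 0"
    by (rule isCont_eq_0_if_bump_integrals_0)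
  then have "ln (q x / r x) = KL q r"
    using assms(2) by (simp add: h_def)
  then have "q x / r x = exp (KL q r)"
    using assms(2,3) exp_ln[of "q x / r x"] by simp
  then show ?thesis
    using assms(3) by (simp add: divide_eq_eq)
qed

lemma KL_minimizer_eventually_zero:
  assumes "KL_minimizer q" "0 < r x" "q x = 0"
  shows "eventually (\<lambda>y. q y = 0) (nhds x)"
proof -
  have "q \<in> D"
    using assms(1) by (simp add: KL_minimizer_def)
  note q = D_densityD[OF this]
  define \<kappa> where "\<kappa> = exp (KL q r)"
  have "0 < \<kappa>"
    by (simp add: \<kappa>_def)
  have "eventually (\<lambda>y. r x / 2 < r y \<and> q y < \<kappa> * (r x / 2)) (nhds x)"
    using eventually_less_isCont[OF isCont_r, of "r x / 2" x]
      eventually_greater_isCont[OF q(5), of x "\<kappa> * (r x / 2)"] assms(2,3) \<open>0 < \<kappa>\<close>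
    by (auto intro: eventually_conj)
  then show ?thesis
  proof eventually_elim
    case (elim y)
    show "q y = 0"
    proof (rule ccontr)
      assume "q y \<noteq> 0"
      then have "q y = \<kappa> * r y"
        using KL_minimizer_proportional[OF assms(1)] elim assms(2) q(2)[of y]
        by (simp add: \<kappa>_def order_le_less)
      then show False
        using elim mult_strict_left_mono[of "r x / 2" "r y" \<kappa>] \<open>0 < \<kappa>\<close> by linarith
    qed
  qed
qed

lemma KL_minimizer_pos:
  assumes "KL_minimizer q" "0 < r x"
  shows "0 < q x"
proof (rule ccontr)
  assume "\<not> 0 < q x"
  have "q \<in> D" and min: "\<And>q'. q' \<in> D \<Longrightarrow> KL q r \<le> KL q' r"
    using assms(1) by (auto simp: KL_minimizer_def)
  note q = D_densityD[OF \<open>q \<in> D\<close>]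
  have "q x = 0"
    using q(2)[of x] \<open>\<not> 0 < q x\<close> by simp
  obtain e where "0 < e" and q_vanishes: "\<forall>y\<in>ball x e. q y = 0"
    using eventually_nhds_imp_ball[OF KL_minimizer_eventually_zero[OF assms \<open>q x = 0\<close>]] by blast
  obtain g where "g \<in> D" and g_support: "\<And>y. 0 < g y \<Longrightarrow> y \<in> ball x e"
    using D_localized[OF assms(2) \<open>0 < e\<close>] by blast
  note g = D_densityD[OF \<open>g \<in> D\<close>]
  have disjoint: "0 < g y \<Longrightarrow> q y = 0" for y
    using g_support q_vanishes by blast
  \<comment> \<open>Moving mass \<open>t\<close> onto \<open>g\<close> gains the entropy \<open>- t ln t\<close>, which beats the linear
    cost for small \<open>t\<close>.\<close>
  define t where "t = min (1/2) (exp (KL q r - KL g r - 1))"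
  have t: "0 < t" "t < 1"
    by (auto simp: t_def)
  have "ln t \<le> ln (exp (KL q r - KL g r - 1))"
    using t(1) by (subst ln_le_cancel_iff) (auto simp: t_def)
  then have "ln t \<le> KL q r - KL g r - 1"
    by simp
  have "KL q r \<le> KL (\<lambda>y. (1 - t) * q y + t * g y) r"
    by (rule min[OF D_mix_closed[OF \<open>q \<in> D\<close> \<open>g \<in> D\<close> disjoint t]])
  also have "\<dots> = (1 - t) * KL q r + t * KL g r + (1 - t) * ln (1 - t) + t * ln t"
    using KL_mix_disjoint(2)[OF q(6) g(6) q(3,2) g(3,2) disjoint borel_measurable_r t] q(4) g(4)
    by simp
  also have "\<dots> \<le> (1 - t) * KL q r + t * KL g r + 0 + t * (KL q r - KL g r - 1)"
    using t \<open>ln t \<le> KL q r - KL g r - 1\<close>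
    by (intro add_mono mult_nonneg_nonpos mult_left_mono) auto
  finally show False
    using t(1) by (simp add: algebra_simps)
qed

lemma KL_minimizer_zero_if_r_zero:
  assumes "KL_minimizer q" "r x = 0"
  shows "q x = 0"
proof (rule ccontr)
  assume "q x \<noteq> 0"
  have "q \<in> D"
    using assms(1) by (simp add: KL_minimizer_def)
  note q = D_densityD[OF this]
  define \<kappa> where "\<kappa> = exp (KL q r)"
  have "0 < \<kappa>" "0 < q x"
    using q(2)[of x] \<open>q x \<noteq> 0\<close> by (auto simp: \<kappa>_def)
  have "eventually (\<lambda>y. q x / 2 < q y \<and> r y < q x / (2 * \<kappa>)) (nhds x)"
    using eventually_less_isCont[OF q(5), of "q x / 2" x]
      eventually_greater_isCont[OF isCont_r, of x "q x / (2 * \<kappa>)"] assms(2) \<open>0 < q x\<close> \<open>0 < \<kappa>\<close>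
    by (auto intro: eventually_conj)
  \<comment> \<open>Near \<open>x\<close>, \<open>q = \<kappa> r\<close> would be too small wherever \<open>r > 0\<close>; so \<open>q > 0 = r\<close> there,
    against \<open>q \<ll> r\<close>.\<close>
  then have "eventually (\<lambda>y. 0 < q y \<and> \<not> 0 < r y) (nhds x)"
  proof eventually_elim
    case (elim y)
    have "\<not> 0 < r y"
    proof
      assume "0 < r y"
      then have "q y = \<kappa> * r y"
        using KL_minimizer_proportional[OF assms(1) _ \<open>0 < r y\<close>] KL_minimizer_pos[OF assms(1)]
        by (simp add: \<kappa>_def)
      also have "\<dots> < \<kappa> * (q x / (2 * \<kappa>))"
        using elim \<open>0 < \<kappa>\<close> by (intro mult_strict_left_mono) auto
      finally show False
        using elim \<open>0 < \<kappa>\<close> by simp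
    qed
    then show ?case
      using elim \<open>0 < q x\<close> by linarith
  qed
  then obtain e where "0 < e" and "\<forall>y\<in>ball x e. 0 < q y \<and> \<not> 0 < r y"
    using eventually_nhds_imp_ball by blast
  moreover have "AE y in lborel. 0 < q y \<longrightarrow> 0 < r y"
    using q(6) by (simp add: KL_finite_def)
  ultimately have "AE y in lborel. y \<notin> ball x e"
    by (auto elim: AE_mp)
  with not_AE_notin_ball[OF \<open>0 < e\<close>] show False
    by blast
qed

lemma KL_minimizer_eq:
  assumes "KL_minimizer q"
  shows "q x = r x / integral\<^sup>L lborel r"
proof -
  have "q \<in> D"
    using assms by (simp add: KL_minimizer_def)
  define \<kappa> where "\<kappa> = exp (KL q r)"
  have "q y = \<kappa> * r y" for y
    using KL_minimizer_proportional[OF assms KL_minimizer_pos[OF assms]] KL_minimizer_zero_if_r_zero[OF assms]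
      r_nonneg[of y] by (cases "r y = 0") (auto simp: \<kappa>_def)
  then have "q = (\<lambda>y. \<kappa> * r y)"
    by blast
  moreover have "0 < \<kappa>"
    by (simp add: \<kappa>_def)
  ultimately have "integral\<^sup>L lborel r = 1 / \<kappa>"
    using D_densityD(4)[OF \<open>q \<in> D\<close>] by (simp add: field_simps)
  then show ?thesis
    using \<open>q = (\<lambda>y. \<kappa> * r y)\<close> by simp
qed

lemma KL_minimizer_normalized:
  assumes "(\<lambda>x. r x / integral\<^sup>L lborel r) \<in> D"
  shows "KL_minimizer (\<lambda>x. r x / integral\<^sup>L lborel r)"
proof -
  define N where "N = integral\<^sup>L lborel r"
  note normalized = D_densityD[OF assms, folded N_def]
  have "N \<noteq> 0"
    using normalized(4) by auto
  moreover have "0 \<le> N"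
    using r_nonneg by (simp add: N_def)
  ultimately have "0 < N"
    by simp
  have "integrable lborel (\<lambda>x. N * (r x / N))"
    using normalized(3) by (rule integrable_mult_right)
  then have "integrable lborel r"
    using \<open>0 < N\<close> by simp
  have "KL (\<lambda>x. r x / N) r = - ln N"
    using KL_normalized_self[OF r_nonneg] \<open>0 < N\<close> by (simp add: N_def)
  moreover have "- ln N \<le> KL q r" if "q \<in> D" for q
    using KL_ge_minus_ln_integral[OF D_densityD(6,3,4,2)[OF that] \<open>integrable lborel r\<close> r_nonneg]
      \<open>0 < N\<close> by (simp add: N_def)
  ultimately show ?thesis
    using assms by (simp add: KL_minimizer_def N_def)
qed

end

section \<open>The Lagrangian of one step\<close>

locale trust_region_step =
  fixes pt qi :: "'a::euclidean_space \<Rightarrow> real" and lam eta :: real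
  assumes integral_pt_pos: "0 < integral\<^sup>L lborel pt"
    and target_density: "(\<lambda>x. pt x / integral\<^sup>L lborel pt) \<in> smooth_densities"
    and qi_density: "qi \<in> smooth_densities"
    and lam_nonneg: "0 \<le> lam" and eta_nonneg: "0 \<le> eta"
begin

definition Z :: real where
  "Z = integral\<^sup>L lborel pt"

definition p :: "'a \<Rightarrow> real" where
  "p x = pt x / Z"

definition c :: real where
  "c = 1 + lam + eta"

definition r :: "'a \<Rightarrow> real" where
  "r x = pw (qi x) (lam / c) * pw (pt x) (1 / c)"

text \<open>The functions \<open>s\<close> for which \<open>lagr_domain\<close> asks \<open>\<integral> q ln (q / s)\<close> to be finite; the
  constant \<open>1\<close> stands for the entropy term.\<close>

definition references :: "('a \<Rightarrow> real) set" where
  "references = {p} \<union> (if lam = 0 then {} else {qi}) \<union> (if eta = 0 then {} else {\<lambda>_. 1})"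

lemma Z_pos: "0 < Z" and c_pos: "0 < c"
  using integral_pt_pos lam_nonneg eta_nonneg by (auto simp: Z_def c_def)

lemma p_density: "p \<in> smooth_densities"
  using target_density by (simp add: p_def[abs_def] Z_def)

lemma pt_eq: "pt x = Z * p x"
  using Z_pos by (simp add: p_def)

lemma lagr_domain_eq: "lagr_domain p qi lam eta = {q \<in> smooth_densities. \<forall>s\<in>references. KL_finite q s}"
  by (auto simp: lagr_domain_def references_def entropy_finite_iff_KL_finite_1)

lemma borel_measurable_p [measurable]: "p \<in> borel_measurable lborel"
  by (rule borel_measurable_lborel_continuous[OF smooth_densitiesD(5)[OF p_density]])

lemma borel_measurable_qi [measurable]: "qi \<in> borel_measurable lborel"
  by (rule borel_measurable_lborel_continuous[OF smooth_densitiesD(5)[OF qi_density]])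

lemma references_isCont: "s \<in> references \<Longrightarrow> isCont s x"
  using smooth_densitiesD(1)[OF p_density] smooth_densitiesD(1)[OF qi_density]
  by (auto simp: references_def smooth_imp_isCont split: if_splits)

lemma references_borel_measurable: "s \<in> references \<Longrightarrow> s \<in> borel_measurable lborel"
  by (auto simp: references_def split: if_splits)

lemma finite_references: "finite references"
  by (simp add: references_def)

lemma pt_nonneg: "0 \<le> pt x"
  using smooth_densitiesD(2)[OF p_density] Z_pos by (simp add: pt_eq)

lemma r_nonneg: "0 \<le> r x"
  using smooth_densitiesD(2)[OF qi_density] pt_nonneg by (simp add: r_def pw_nonneg)

lemma continuous_r: "continuous_on UNIV r"
proof -
  have "continuous_on UNIV (\<lambda>x. Z * p x)"
    using smooth_densitiesD(5)[OF p_density] by (rule continuous_on_mult_left)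
  then have "continuous_on UNIV pt"
    by (simp add: pt_eq[symmetric])
  then have "continuous_on UNIV (\<lambda>x. pw (pt x) (1 / c))"
    using pt_nonneg c_pos by (intro continuous_on_pw) auto
  moreover have "continuous_on UNIV (\<lambda>x. pw (qi x) (lam / c))"
    using smooth_densitiesD(2,5)[OF qi_density] lam_nonneg c_pos by (intro continuous_on_pw) auto
  ultimately show ?thesis
    unfolding r_def[abs_def] by (intro continuous_on_mult)
qed

lemma borel_measurable_r [measurable]: "r \<in> borel_measurable lborel"
  using continuous_r by (rule borel_measurable_lborel_continuous)

lemma r_pos_iff: "0 < r x \<longleftrightarrow> 0 < p x \<and> (lam \<noteq> 0 \<longrightarrow> 0 < qi x)"
proof -
  have "0 < pt x \<longleftrightarrow> 0 < p x"
    using Z_pos by (simp add: pt_eq zero_less_mult_iff)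
  moreover have "0 \<le> qi x"
    using smooth_densitiesD(2)[OF qi_density] .
  moreover have "0 \<le> pw (qi x) (lam / c)" "0 \<le> pw (pt x) (1 / c)"
    using \<open>0 \<le> qi x\<close> pt_nonneg by (simp_all add: pw_nonneg)
  ultimately show ?thesis
    using pt_nonneg[of x] c_pos
    by (auto simp: r_def pw_pos_iff zero_less_mult_iff order_le_less)
qed

lemma c_mult_ln_r:
  assumes "0 < r x"
  shows "c * ln (r x) = lam * ln (qi x) + ln Z + ln (p x)"
proof -
  have "0 < p x" and qi_pos: "lam = 0 \<or> 0 < qi x"
    using assms r_pos_iff by auto
  then have "0 < pt x"
    using Z_pos by (simp add: pt_eq)
  have "0 < pw (qi x) (lam / c)"
    using qi_pos smooth_densitiesD(2)[OF qi_density, of x] by (auto simp: pw_pos_iff)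
  moreover have "0 < pw (pt x) (1 / c)"
    using \<open>0 < pt x\<close> by (simp add: pw_pos_iff)
  moreover have "ln (pw (qi x) (lam / c)) = lam / c * ln (qi x)"
    using qi_pos by (intro ln_pw) auto
  ultimately have "ln (r x) = lam / c * ln (qi x) + 1 / c * ln (pt x)"
    using \<open>0 < pt x\<close> by (simp add: r_def ln_mult ln_pw)
  also have "ln (pt x) = ln Z + ln (p x)"
    using Z_pos \<open>0 < p x\<close> by (simp add: pt_eq ln_mult)
  finally show ?thesis
    using c_pos by (simp add: field_simps)
qed

definition lagrangian_integrand :: "('a \<Rightarrow> real) \<Rightarrow> 'a \<Rightarrow> real" where
  "lagrangian_integrand q x = q x * ln (q x / p x) + lam * (q x * ln (q x / qi x)) + eta * (q x * ln (q x))"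

lemma lagrangian_integrand_eq:
  assumes "0 \<le> q x" "0 < q x \<Longrightarrow> 0 < r x"
  shows "lagrangian_integrand q x = c * (q x * ln (q x / r x)) + q x * ln Z"
proof (cases "q x = 0")
  case False
  then have "0 < q x" "0 < r x"
    using assms by auto
  then have "0 < p x" "lam \<noteq> 0 \<Longrightarrow> 0 < qi x"
    using r_pos_iff by auto
  have "q x * ln (q x / p x) = q x * ln (q x) - q x * ln (p x)"
    using \<open>0 < q x\<close> \<open>0 < p x\<close> by (simp add: ln_div algebra_simps)
  moreover have "lam * (q x * ln (q x / qi x)) = lam * (q x * ln (q x)) - q x * (lam * ln (qi x))"
    using \<open>0 < q x\<close> \<open>lam \<noteq> 0 \<Longrightarrow> 0 < qi x\<close> by (cases "lam = 0") (auto simp: ln_div algebra_simps)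
  moreover have "c * (q x * ln (q x / r x)) = c * (q x * ln (q x)) - q x * (c * ln (r x))"
    using \<open>0 < q x\<close> \<open>0 < r x\<close> by (simp add: ln_div algebra_simps)
  ultimately show ?thesis
    unfolding lagrangian_integrand_def c_mult_ln_r[OF \<open>0 < r x\<close>] by (simp add: c_def algebra_simps)
qed (simp add: lagrangian_integrand_def)

lemma lagr_domain_AE_pos:
  assumes "q \<in> lagr_domain p qi lam eta"
  shows "AE x in lborel. 0 < q x \<longrightarrow> 0 < r x"
proof -
  have "AE x in lborel. 0 < q x \<longrightarrow> 0 < p x"
    using assms by (simp add: lagr_domain_def KL_finite_def)
  moreover have "AE x in lborel. lam \<noteq> 0 \<longrightarrow> 0 < q x \<longrightarrow> 0 < qi x"
    using assms by (cases "lam = 0") (auto simp: lagr_domain_def KL_finite_def)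
  ultimately show ?thesis
    by eventually_elim (simp add: r_pos_iff)
qed

lemma AE_lagrangian_integrand_eq:
  assumes "q \<in> lagr_domain p qi lam eta"
  shows "AE x in lborel. lagrangian_integrand q x = c * (q x * ln (q x / r x)) + q x * ln Z"
  using lagr_domain_AE_pos[OF assms]
proof eventually_elim
  case (elim x)
  have "0 \<le> q x"
    using assms by (simp add: lagr_domain_def smooth_densities_def)
  then show ?case
    using elim by (intro lagrangian_integrand_eq) auto
qed

lemma integrable_lagrangian_integrand:
  assumes "q \<in> lagr_domain p qi lam eta"
  shows "integrable lborel (lagrangian_integrand q)"
    and "integral\<^sup>L lborel (lagrangian_integrand q) = KL q p + lam * KL q qi - eta * entropy q"
proof -
  have q: "KL_finite q p" "lam \<noteq> 0 \<Longrightarrow> KL_finite q qi" "eta \<noteq> 0 \<Longrightarrow> entropy_finite q"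
    using assms by (auto simp: lagr_domain_def)
  have "integrable lborel (\<lambda>x. lam * (q x * ln (q x / qi x)))"
    using q(2) by (cases "lam = 0") (auto simp: KL_finite_def)
  moreover have "integrable lborel (\<lambda>x. eta * (q x * ln (q x)))"
    using q(3) by (cases "eta = 0") (auto simp: entropy_finite_def)
  ultimately show "integrable lborel (lagrangian_integrand q)"
    and "integral\<^sup>L lborel (lagrangian_integrand q) = KL q p + lam * KL q qi - eta * entropy q"
    using q(1) by (simp_all add: lagrangian_integrand_def[abs_def] KL_def entropy_def KL_finite_def)
qed

lemma lagr_domain_KL_finite_r:
  assumes "q \<in> lagr_domain p qi lam eta"
  shows "KL_finite q r"
proof -
  have "integrable lborel q"
    using assms by (simp add: lagr_domain_def smooth_densities_def)
  then have [measurable]: "q \<in> borel_measurable lborel"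
    by (rule borel_measurable_integrable)
  have "AE x in lborel. (lagrangian_integrand q x - q x * ln Z) / c = q x * ln (q x / r x)"
    using AE_lagrangian_integrand_eq[OF assms] by eventually_elim (use c_pos in simp)
  moreover have "integrable lborel (\<lambda>x. (lagrangian_integrand q x - q x * ln Z) / c)"
    using integrable_lagrangian_integrand(1)[OF assms] \<open>integrable lborel q\<close> by simp
  moreover have "(\<lambda>x. q x * ln (q x / r x)) \<in> borel_measurable lborel"
    by measurable
  ultimately have "integrable lborel (\<lambda>x. q x * ln (q x / r x))"
    by (blast intro: integrable_cong_AE_imp)
  then show ?thesis
    using lagr_domain_AE_pos[OF assms] by (simp add: KL_finite_def)
qed

lemma lagrangian_eq_KL_r:
  assumes "q \<in> lagr_domain p qi lam eta"
  shows "lagrangian p qi e\<^sub>1 e\<^sub>2 lam eta q = c * KL q r + (ln Z - lam * e\<^sub>1 + eta * (entropy qi - e\<^sub>2))"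
proof -
  have q: "integrable lborel q" "integral\<^sup>L lborel q = 1"
    using assms by (auto simp: lagr_domain_def smooth_densities_def)
  have [measurable]: "q \<in> borel_measurable lborel"
    using q(1) by (rule borel_measurable_integrable)
  have "KL q p + lam * KL q qi - eta * entropy q = (\<integral>x. c * (q x * ln (q x / r x)) + q x * ln Z \<partial>lborel)"
    unfolding integrable_lagrangian_integrand(2)[OF assms, symmetric]
    by (rule integral_cong_AE[OF _ _ AE_lagrangian_integrand_eq[OF assms]])
      (measurable, simp add: lagrangian_integrand_def[abs_def], measurable)
  also have "\<dots> = c * KL q r + ln Z"
    using lagr_domain_KL_finite_r[OF assms] q by (simp add: KL_def KL_finite_def)
  finally show ?thesis
    by (simp add: lagrangian_def algebra_simps)
qed

lemma lagr_domain_mult_closed: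
  assumes "q \<in> lagr_domain p qi lam eta" "smooth w" "0 < a" "\<And>x. a \<le> w x \<and> w x \<le> b"
    and "integral\<^sup>L lborel (\<lambda>x. q x * w x) = 1"
  shows "(\<lambda>x. q x * w x) \<in> lagr_domain p qi lam eta"
proof -
  have q: "q \<in> smooth_densities" "\<And>s. s \<in> references \<Longrightarrow> KL_finite q s"
    using assms(1) by (auto simp: lagr_domain_eq)
  note q_density = smooth_densitiesD[OF q(1)]
  have w_measurable: "w \<in> borel_measurable lborel"
    using assms(2) smooth_imp_continuous borel_measurable_lborel_continuous by blast
  have w_bounds: "a \<le> w x" "w x \<le> b" "0 < w x" for x
    using assms(3) assms(4)[of x] by auto
  have "\<bar>w x\<bar> \<le> b" for x
    using w_bounds(2,3)[of x] by (simp add: abs_of_pos)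
  then have "integrable lborel (\<lambda>x. w x * q x)"
    using q_density(3) w_measurable by (intro integrable_bounded_mult)
  then have "integrable lborel (\<lambda>x. q x * w x)"
    by (simp add: mult.commute)
  moreover have "KL_finite (\<lambda>x. q x * w x) s" if "s \<in> references" for s
    using KL_finite_mult_bounded[OF q(2)[OF that] q_density(3,2) w_measurable assms(3) w_bounds(1,2)
        references_borel_measurable[OF that]] .
  moreover have "0 \<le> q x * w x" for x
    using q_density(2)[of x] w_bounds(3)[of x] by simp
  ultimately show ?thesis
    using assms(2,5) q_density(1) by (auto simp: lagr_domain_eq smooth_densities_def intro: smooth_mult)
qed

lemma lagr_domain_mix_closed:
  assumes "q \<in> lagr_domain p qi lam eta" "g \<in> lagr_domain p qi lam eta"
    and "\<And>x. 0 < g x \<Longrightarrow> q x = 0" "0 < t" "t < 1"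
  shows "(\<lambda>x. (1 - t) * q x + t * g x) \<in> lagr_domain p qi lam eta"
proof -
  have q: "q \<in> smooth_densities" "\<And>s. s \<in> references \<Longrightarrow> KL_finite q s"
    and g: "g \<in> smooth_densities" "\<And>s. s \<in> references \<Longrightarrow> KL_finite g s"
    using assms(1,2) by (auto simp: lagr_domain_eq)
  note q_density = smooth_densitiesD[OF q(1)] and g_density = smooth_densitiesD[OF g(1)]
  have "KL_finite (\<lambda>x. (1 - t) * q x + t * g x) s" if "s \<in> references" for s
    using KL_mix_disjoint(1)[OF q(2)[OF that] g(2)[OF that] q_density(3,2) g_density(3,2) assms(3)
        references_borel_measurable[OF that] assms(4,5)] .
  moreover have "smooth (\<lambda>x. (1 - t) * q x + t * g x)"
    using q_density(1) g_density(1) by (intro smooth_add smooth_mult smooth_const)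
  ultimately show ?thesis
    using q_density(2-4) g_density(2-4) assms(4,5)
    by (auto simp: lagr_domain_eq smooth_densities_def)
qed

lemma lagr_domain_localized:
  assumes "0 < r x" "0 < e"
  shows "\<exists>g\<in>lagr_domain p qi lam eta. \<forall>y. 0 < g y \<longrightarrow> y \<in> ball x e"
proof -
  have ref_pos: "0 < s x" if "s \<in> references" for s
    using that assms(1) r_pos_iff by (auto simp: references_def split: if_splits)
  have "eventually (\<lambda>y. \<forall>s\<in>references. s x / 2 < s y \<and> s y < 2 * s x) (nhds x)"
  proof (rule eventually_ball_finite[OF finite_references], rule ballI)
    fix s
    assume "s \<in> references"
    then have "s x / 2 < s x" "s x < 2 * s x"
      using ref_pos by auto
    with references_isCont[OF \<open>s \<in> references\<close>, of x]
    show "eventually (\<lambda>y. s x / 2 < s y \<and> s y < 2 * s x) (nhds x)"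
      by (intro eventually_conj eventually_less_isCont eventually_greater_isCont)
  qed
  with eventually_nhds_ball[OF assms(2)]
  have nearby: "eventually (\<lambda>y. y \<in> ball x e \<and> (\<forall>s\<in>references. s x / 2 < s y \<and> s y < 2 * s x))
      (nhds x)"
    by (rule eventually_conj)
  obtain \<rho> where "0 < \<rho>" and near: "\<forall>y\<in>ball x \<rho>.
      y \<in> ball x e \<and> (\<forall>s\<in>references. s x / 2 < s y \<and> s y < 2 * s x)"
    using eventually_nhds_imp_ball[OF nearby] by blast
  have "KL_finite (bump_density x \<rho>) s" if "s \<in> references" for s
  proof (rule KL_finite_bump_density[where c = "s x / 2" and C = "2 * s x"])
    show "s x / 2 \<le> s y \<and> s y \<le> 2 * s x" if "y \<in> ball x \<rho>" for y
      using near \<open>s \<in> references\<close> that by (simp add: less_imp_le)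
  qed (use \<open>0 < \<rho>\<close> references_borel_measurable[OF that] ref_pos[OF that] in simp_all)
  then have "bump_density x \<rho> \<in> lagr_domain p qi lam eta"
    using bump_density_smooth_densities[OF \<open>0 < \<rho>\<close>] by (simp add: lagr_domain_eq)
  then show ?thesis
    using bump_density_pos_iff[OF \<open>0 < \<rho>\<close>] near by blast
qed

sublocale KL_admissible r "lagr_domain p qi lam eta"
proof
  show "lagr_domain p qi lam eta \<subseteq> smooth_densities"
    by (auto simp: lagr_domain_def)
qed (fact continuous_r r_nonneg lagr_domain_KL_finite_r lagr_domain_mult_closed
       lagr_domain_mix_closed lagr_domain_localized)+

lemma lagrangian_minimal_iff_KL_minimizer:
  assumes "q \<in> lagr_domain p qi lam eta"
  shows "(\<forall>q'\<in>lagr_domain p qi lam eta.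
      lagrangian p qi e\<^sub>1 e\<^sub>2 lam eta q \<le> lagrangian p qi e\<^sub>1 e\<^sub>2 lam eta q') \<longleftrightarrow> KL_minimizer q"
  using assms c_pos by (simp add: KL_minimizer_def lagrangian_eq_KL_r)

end

theorem proposition3:
  fixes pt :: "'a::euclidean_space \<Rightarrow> real" and qi :: "'a \<Rightarrow> real"
    and eps_tr eps_ent lam eta :: real
  defines "Z \<equiv> integral\<^sup>L lborel pt"
  defines "p \<equiv> (\<lambda>x. pt x / Z)"
  defines "c \<equiv> 1 + lam + eta"
  defines "Zn \<equiv> (\<integral>x. pw (qi x) (lam / c) * pw (pt x) (1 / c) \<partial>lborel)"
  defines "qn \<equiv> (\<lambda>x. pw (qi x) (lam / c) * pw (pt x) (1 / c) / Zn)"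
  assumes pt_cont: "continuous_on UNIV pt"
    and pt_nonneg: "\<forall>x. 0 \<le> pt x"
    and pt_int: "integrable lborel pt"
    and Z_pos: "0 < Z"
    and p_dens: "p \<in> smooth_densities"
    and eps: "0 < eps_tr" "0 < eps_ent"
    and qi_dens: "qi \<in> smooth_densities"
    and mult: "0 \<le> lam" "0 \<le> eta"
    and Zn_int: "integrable lborel (\<lambda>x. pw (qi x) (lam / c) * pw (pt x) (1 / c))"
  shows "(\<forall>q \<in> lagr_domain p qi lam eta.
            (\<forall>q' \<in> lagr_domain p qi lam eta.
               lagrangian p qi eps_tr eps_ent lam eta q \<le> lagrangian p qi eps_tr eps_ent lam eta q')
            \<longrightarrow> (\<forall>x. q x = qn x))
       \<and> (qn \<in> lagr_domain p qi lam eta \<longrightarrow>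
            (\<forall>q' \<in> lagr_domain p qi lam eta.
               lagrangian p qi eps_tr eps_ent lam eta qn \<le> lagrangian p qi eps_tr eps_ent lam eta q'))"
proof -
  interpret step: trust_region_step pt qi lam eta
    using Z_pos p_dens qi_dens mult by unfold_locales (simp_all add: Z_def p_def)
  have "step.p = p"
    by (simp add: fun_eq_iff step.p_def step.Z_def p_def Z_def)
  moreover have "qn = (\<lambda>x. step.r x / integral\<^sup>L lborel step.r)"
    by (simp add: qn_def Zn_def c_def step.r_def[abs_def] step.c_def)
  ultimately show ?thesis
    using step.lagrangian_minimal_iff_KL_minimizer step.KL_minimizer_eq step.KL_minimizer_normalized
    by auto
qed

end
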